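(* Let $\theta=\frac{a}{b}$ with $a,b$ positive integers, $a>b$. Let $w$ be a positive function on $(0,+\infty)$ such that $x^kw(x)$ is integrable on $(0,+\infty)$ for every integer $k\geq 0$, and let $p_j,q_j$ ($j=0,1,2,\dots$) be the biorthogonal polynomials defined in the context. Then there exist real coefficients $u_0(k),\dots,u_{a+b}(k)$ and $v_0(k),\dots,v_{a+b}(k)$ (for every integer $k\geq 0$) such that for all $x$, \begin{align*} x^ap_k(x) &=u_0(k)p_{k+a}(x) + u_1(k)p_{k+a-1}(x)+\dots +u_{a+b}(k)p_{k-b}(x),\\ x^bq_k(x) &=v_0(k)q_{k+b}(x) + v_1(k)q_{k+b-1}(x)+\dots +v_{a+b}(k)q_{k-a}(x), \end{align*} with the convention $p_j=q_j=0$ for $j<0$, and these coefficients satisfy $$u_j(k)=v_{a+b-j}(k+a-j)$$ (whenever $k+a-j\geq 0$). Moreover, for every integer $n\geq 1$, every complex $x$ and every $y\geq 0$ (with $y^\theta\geq 0$) such that $x^a\neq y^a$, the Christoffel–Darboux formula $$\sum_{k=0}^{n-1}p_k(x)q_k(y^\theta)=\frac{1}{x^a-y^a}\left(\sum_{\ell=1}^{a}\sum_{k=n-\ell}^{n-1}u_{a-\ell}(k)p_{k+\ell}(x)q_k(y^\theta)-\sum_{\ell=1}^b\sum_{k=n-\ell}^{n-1}u_{a+\ell}(k+\ell)p_k(x)q_{k+\ell}(y^\theta)\right)$$ holds, where terms involving a polynomial with negative index are zero.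
   Context: For $\theta\geq 1$ and $w$ as in the claim, the biorthogonal polynomials $p_j(x)=\kappa_jx^j+\dots$ and $q_j(x)=\kappa_jx^j+\dots$ are the (unique) polynomials of exact degree $j$, with equal positive leading coefficients $\kappa_j$, satisfying $\int_0^{+\infty}p_j(x)q_k(x^\theta)w(x)\,dx=\delta_{jk}$ for all $j,k\geq 0$. (Existence and uniqueness holds since the bimoment matrices $\left(\int_0^\infty x^{k+j\theta}w(x)dx\right)_{j,k=0}^{n-1}$ are nonsingular.) *)

theory Defs
  imports "HOL-Analysis.Analysis" "HOL-Computational_Algebra.Polynomial"
begin

definition cpoly :: "real poly \<Rightarrow> complex \<Rightarrow> complex" where
  "cpoly P z = poly (map_poly complex_of_real P) z"

end

theory Submission
  imports Defs
begin

text \<open>Biorthogonality makes \<open><f, g> = \<integral> f(x) g(x\<^sup>\<theta>) w(x) dx\<close> a pairing in which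
  \<open>p\<^sub>j\<close> and \<open>q\<^sub>k\<close> are dual graded bases, so every polynomial expands in either family with
  coefficients given by the pairing. Because \<open>x\<^sup>a = (x\<^sup>\<theta>)\<^sup>b\<close>, multiplication by \<open>x\<^sup>a\<close> on the
  left is adjoint to multiplication by \<open>y\<^sup>b\<close> on the right. Hence \<open>x\<^sup>a p\<^sub>k\<close> has no component
  along \<open>p\<^sub>m\<close> for \<open>m < k - b\<close>, \<open>y\<^sup>b q\<^sub>k\<close> none along \<open>q\<^sub>m\<close> for \<open>m < k - a\<close>, and both banded
  recurrences have coefficients \<open><x\<^sup>a p\<^sub>k, q\<^sub>m> = <p\<^sub>k, y\<^sup>b q\<^sub>m>\<close>, which is the duality
  \<open>u\<^sub>j(k) = v\<^sub>a\<^sub>+\<^sub>b\<^sub>-\<^sub>j(k+a-j)\<close>. Multiplying the kernel by \<open>x\<^sup>a - y\<^sup>b\<close> and inserting both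
  recurrences, the partial sums for \<open>n\<close> and \<open>n + 1\<close> differ only by boundary terms, which gives
  the Christoffel--Darboux formula.\<close>

lemma power_le_one_plus_power:
  fixes x :: real
  assumes "0 \<le> x" and "i \<le> d"
  shows "x ^ i \<le> 1 + x ^ d"
proof (cases "x \<le> 1")
  case True
  then have "x ^ i \<le> 1" using assms(1) by (simp add: power_le_one)
  then show ?thesis using assms(1) by (smt (verit) zero_le_power)
next
  case False
  then have "x ^ i \<le> x ^ d" using assms(2) by (intro power_increasing) auto
  then show ?thesis by simp
qed

lemma powr_le_one_plus_power:
  fixes x r :: real
  assumes "0 < x" and "0 \<le> r" and "r \<le> real d"
  shows "x powr r \<le> 1 + x ^ d"
proof (cases "x \<le> 1")
  case True
  then have "x powr r \<le> 1" using assms powr_mono2[of r x 1] by simp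
  then show ?thesis using assms(1) by (smt (verit) zero_le_power)
next
  case False
  then have "x powr r \<le> x powr real d" using assms by (intro powr_mono) auto
  then show ?thesis using assms(1) by (simp add: powr_realpow)
qed

lemma abs_poly_le_one_plus_power:
  fixes x :: real
  assumes "0 \<le> x"
  shows "\<bar>poly P x\<bar> \<le> (\<Sum>i\<le>degree P. \<bar>coeff P i\<bar>) * (1 + x ^ degree P)"
proof -
  have "\<bar>poly P x\<bar> \<le> (\<Sum>i\<le>degree P. \<bar>coeff P i * x ^ i\<bar>)"
    unfolding poly_altdef by (rule sum_abs)
  also have "\<dots> \<le> (\<Sum>i\<le>degree P. \<bar>coeff P i\<bar> * (1 + x ^ degree P))"
    using assms power_le_one_plus_power
    by (intro sum_mono) (auto simp: abs_mult intro!: mult_left_mono)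
  finally show ?thesis by (simp add: sum_distrib_right)
qed

lemma powr_power_eq_power:
  fixes x \<theta> :: real
  assumes "0 \<le> x" and "0 < x \<or> 0 < a" and "\<theta> * real b = real a"
  shows "(x powr \<theta>) ^ b = x ^ a"
proof (cases "x = 0")
  case True
  with assms have "0 < a" "0 < b" by (auto intro: Nat.gr0I)
  with True show ?thesis by (simp add: zero_power)
next
  case False
  then have "(x powr \<theta>) ^ b = x powr (\<theta> * real b)"
    using assms(1) by (simp add: powr_realpow[symmetric] powr_powr)
  then show ?thesis using assms False by (simp add: powr_realpow)
qed

lemma poly_powr_borel_measurable:
  fixes f g :: "real poly" and \<theta> :: real
  shows "(\<lambda>x. poly f x * poly g (x powr \<theta>)) \<in> borel_measurable borel"
proof -
  have poly_meas: "poly h \<in> borel_measurable borel" for h :: "real poly"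
    by (intro borel_measurable_continuous_onI continuous_on_poly continuous_on_id)
  have "(\<lambda>x. x powr \<theta>) \<in> borel_measurable borel" by measurable
  then have "(\<lambda>x. poly g (x powr \<theta>)) \<in> borel_measurable borel"
    using measurable_compose[OF _ poly_meas] by blast
  then show ?thesis using poly_meas[of f] by simp
qed

locale bimoment_weight =
  fixes w :: "real \<Rightarrow> real" and \<theta> :: real
  assumes \<theta>_nonneg: "0 \<le> \<theta>"
    and w_pos: "\<And>x. 0 < x \<Longrightarrow> 0 < w x"
    and moments_integrable: "\<And>k::nat. set_integrable lborel {0<..} (\<lambda>x. x ^ k * w x)"
begin

definition pairing :: "real poly \<Rightarrow> real poly \<Rightarrow> real" where
  "pairing f g = (LINT x:{0<..}|lborel. poly f x * poly g (x powr \<theta>) * w x)"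

lemma pairing_integrand_measurable:
  "set_borel_measurable lborel {0<..} (\<lambda>x. poly f x * poly g (x powr \<theta>) * w x)"
proof -
  have "(\<lambda>x. indicator {0<..} x *\<^sub>R w x) \<in> borel_measurable lborel"
    using moments_integrable[of 0] borel_measurable_integrable
    by (simp add: set_integrable_def)
  then have "(\<lambda>x. (poly f x * poly g (x powr \<theta>)) * (indicator {0<..} x *\<^sub>R w x)) \<in> borel_measurable lborel"
    using borel_measurable_times[OF poly_powr_borel_measurable] by simp
  then show ?thesis
    unfolding set_borel_measurable_def by (simp add: mult_ac)
qed

lemma pairing_integrable:
  "set_integrable lborel {0<..} (\<lambda>x. poly f x * poly g (x powr \<theta>) * w x)"
proof (rule set_integrable_bound[OF _ pairing_integrand_measurable])
  define Cf Cg where "Cf = (\<Sum>i\<le>degree f. \<bar>coeff f i\<bar>)" and "Cg = (\<Sum>i\<le>degree g. \<bar>coeff g i\<bar>)"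
  define d M where "d = degree f" and "M = nat \<lceil>\<theta> * degree g\<rceil>"
  let ?bound = "\<lambda>x. Cf * Cg * (2 * (x ^ 0 * w x) + 2 * (x ^ d * w x) + x ^ M * w x + x ^ (d + M) * w x)"
  show "set_integrable lborel {0<..} ?bound"
    by (intro set_integrable_mult_right set_integral_add moments_integrable)
  show "AE x in lborel. x \<in> {0<..} \<longrightarrow>
      norm (poly f x * poly g (x powr \<theta>) * w x) \<le> norm (?bound x)"
  proof (rule AE_I2, rule impI)
    fix x :: real
    assume "x \<in> {0<..}"
    then have x: "0 < x" and wx: "0 < w x" using w_pos by auto
    have C: "0 \<le> Cf" "0 \<le> Cg" unfolding Cf_def Cg_def by (auto intro: sum_nonneg)
    have bound_f: "\<bar>poly f x\<bar> \<le> Cf * (1 + x ^ d)"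
      using abs_poly_le_one_plus_power[of x f] x unfolding Cf_def d_def by simp
    have "(x powr \<theta>) ^ degree g = x powr (\<theta> * degree g)"
      using x by (simp add: powr_realpow[symmetric] powr_powr)
    also have "\<dots> \<le> 1 + x ^ M"
      unfolding M_def using x \<theta>_nonneg by (intro powr_le_one_plus_power) auto
    moreover have "\<bar>poly g (x powr \<theta>)\<bar> \<le> Cg * (1 + (x powr \<theta>) ^ degree g)"
      using abs_poly_le_one_plus_power[of "x powr \<theta>" g] unfolding Cg_def by simp
    ultimately have bound_g: "\<bar>poly g (x powr \<theta>)\<bar> \<le> Cg * (2 + x ^ M)"
      using C by (smt (verit) mult_left_mono)
    have "norm (poly f x * poly g (x powr \<theta>) * w x) = \<bar>poly f x\<bar> * \<bar>poly g (x powr \<theta>)\<bar> * w x"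
      using wx by (simp add: abs_mult)
    also have "\<dots> \<le> (Cf * (1 + x ^ d)) * (Cg * (2 + x ^ M)) * w x"
      using bound_f bound_g wx by (intro mult_right_mono mult_mono) auto
    also have "\<dots> = ?bound x"
      by (simp add: algebra_simps power_add)
    finally show "norm (poly f x * poly g (x powr \<theta>) * w x) \<le> norm (?bound x)" by simp
  qed
qed

lemma pairing_add_left: "pairing (f1 + f2) g = pairing f1 g + pairing f2 g"
  unfolding pairing_def using set_integral_add(2)[OF pairing_integrable pairing_integrable]
  by (simp add: algebra_simps)

lemma pairing_add_right: "pairing f (g1 + g2) = pairing f g1 + pairing f g2"
  unfolding pairing_def using set_integral_add(2)[OF pairing_integrable pairing_integrable]
  by (simp add: algebra_simps)

lemma pairing_smult_left: "pairing (smult c f) g = c * pairing f g"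
  unfolding pairing_def using set_integral_mult_right[where a=c]
  by (simp add: algebra_simps)

lemma pairing_smult_right: "pairing f (smult c g) = c * pairing f g"
  unfolding pairing_def using set_integral_mult_right[where a=c]
  by (simp add: algebra_simps)

lemma pairing_sum_left: "pairing (\<Sum>i\<in>I. F i) g = (\<Sum>i\<in>I. pairing (F i) g)"
  by (induction I rule: infinite_finite_induct) (simp_all add: pairing_add_left, simp_all add: pairing_def)

lemma pairing_sum_right: "pairing f (\<Sum>i\<in>I. G i) = (\<Sum>i\<in>I. pairing f (G i))"
  by (induction I rule: infinite_finite_induct) (simp_all add: pairing_add_right, simp_all add: pairing_def)

lemma pairing_monom_shift:
  assumes "\<theta> * real b = real a"
  shows "pairing (monom 1 a * f) g = pairing f (monom 1 b * g)"
  unfolding pairing_def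
  using powr_power_eq_power[OF _ _ assms]
  by (intro set_lebesgue_integral_cong) (auto simp: poly_monom)

end

lemma graded_basis_expansion:
  fixes P :: "nat \<Rightarrow> 'a::field poly"
  assumes degree_P: "\<And>m. degree (P m) = m" and P_nonzero: "\<And>m. P m \<noteq> 0"
    and "degree f \<le> N"
  shows "\<exists>c. f = (\<Sum>m\<le>N. smult (c m) (P m))"
  using assms(3)
proof (induction N arbitrary: f)
  case 0
  then obtain c0 where f: "f = [:c0:]" by (metis degree0_coeffs le_zero_eq)
  obtain d0 where P0: "P 0 = [:d0:]" using degree_P[of 0] by (metis degree0_coeffs)
  with P_nonzero[of 0] have "d0 \<noteq> 0" by auto
  with f P0 have "f = smult (c0 / d0) (P 0)" by simp
  then show ?case by (intro exI[of _ "\<lambda>_. c0 / d0"]) simp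
next
  case (Suc N)
  define c where "c = coeff f (Suc N) / lead_coeff (P (Suc N))"
  have "coeff (f - smult c (P (Suc N))) i = 0" if "N < i" for i
  proof (cases "i = Suc N")
    case True
    have "lead_coeff (P (Suc N)) \<noteq> 0" using P_nonzero by simp
    then show ?thesis using True degree_P[of "Suc N"] by (simp add: c_def)
  next
    case False
    then have "Suc N < i" using that by simp
    then show ?thesis using Suc.prems degree_P[of "Suc N"] by (simp add: coeff_eq_0)
  qed
  then have "degree (f - smult c (P (Suc N))) \<le> N" by (intro degree_le) auto
  then obtain c' where "f - smult c (P (Suc N)) = (\<Sum>m\<le>N. smult (c' m) (P m))"
    using Suc.IH by blast
  then have "f = (\<Sum>m\<le>Suc N. smult ((c'(Suc N := c)) m) (P m))"
    by (simp add: atMost_Suc algebra_simps)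
  then show ?case by blast
qed

lemma sum_atMost_reverse_band:
  fixes F :: "nat \<Rightarrow> 'a::comm_monoid_add"
  assumes "\<And>m. m + c < k \<Longrightarrow> F m = 0"
  shows "(\<Sum>m\<le>k + a. F m) = (\<Sum>j=0..a+c. if j \<le> k + a then F (k + a - j) else 0)"
proof -
  have "(\<Sum>m\<le>k + a. F m) = (\<Sum>j=0..k+a. F (k + a - j))"
    by (subst sum.atLeastAtMost_rev) (simp add: atMost_atLeast0)
  also have "\<dots> = (\<Sum>j=0..k+a. if j \<le> a + c then F (k + a - j) else 0)"
    using assms by (intro sum.cong) auto
  also have "\<dots> = (\<Sum>j\<in>{j\<in>{0..k+a}. j \<le> a + c}. F (k + a - j))"
    by (rule sum.inter_filter[symmetric]) simp
  also have "{j\<in>{0..k+a}. j \<le> a + c} = {j\<in>{0..a+c}. j \<le> k + a}"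
    by auto
  also have "(\<Sum>j\<in>\<dots>. F (k + a - j)) = (\<Sum>j=0..a+c. if j \<le> k + a then F (k + a - j) else 0)"
    by (rule sum.inter_filter) simp
  finally show ?thesis .
qed

lemma degree_monom_one_mult:
  fixes f :: "'a::comm_semiring_1 poly"
  shows "degree (monom 1 n * f) \<le> n + degree f"
  using degree_mult_le[of "monom 1 n" f] degree_monom_le[of "1::'a" n] by linarith

lemma cpoly_0: "cpoly 0 z = 0"
  by (simp add: cpoly_def)

lemma cpoly_add: "cpoly (f + g) z = cpoly f z + cpoly g z"
proof -
  have "map_poly complex_of_real (f + g) = map_poly of_real f + map_poly of_real g"
    by (intro poly_eqI) (simp add: coeff_map_poly)
  then show ?thesis by (simp add: cpoly_def)
qed

lemma cpoly_mult: "cpoly (f * g) z = cpoly f z * cpoly g z"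
proof -
  have "map_poly complex_of_real (f * g) = map_poly of_real f * map_poly of_real g"
    by (intro poly_eqI) (simp add: coeff_map_poly coeff_mult)
  then show ?thesis by (simp add: cpoly_def)
qed

lemma cpoly_smult: "cpoly (smult c f) z = of_real c * cpoly f z"
  by (simp add: cpoly_def map_poly_smult)

lemma cpoly_monom: "cpoly (monom 1 n) z = z ^ n"
  by (simp add: cpoly_def map_poly_monom poly_monom)

lemma cpoly_sum: "cpoly (\<Sum>i\<in>I. F i) z = (\<Sum>i\<in>I. cpoly (F i) z)"
  by (induction I rule: infinite_finite_induct) (simp_all add: cpoly_0 cpoly_add)

lemma cpoly_of_real: "cpoly f (of_real y) = of_real (poly f y)"
  by (induction f) (simp_all add: cpoly_def map_poly_pCons)

lemma cpoly_recurrence: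
  assumes "monom 1 a * P k = (\<Sum>j=0..N. if j \<le> k + a then smult (c j) (P (k + a - j)) else 0)"
  shows "z ^ a * cpoly (P k) z = (\<Sum>j=0..N. if j \<le> k + a then of_real (c j) * cpoly (P (k + a - j)) z else 0)"
proof -
  have "z ^ a * cpoly (P k) z = cpoly (monom 1 a * P k) z"
    by (simp add: cpoly_mult cpoly_monom)
  also have "\<dots> = (\<Sum>j=0..N. if j \<le> k + a then of_real (c j) * cpoly (P (k + a - j)) z else 0)"
    unfolding assms cpoly_sum by (intro sum.cong) (simp_all add: cpoly_smult cpoly_0)
  finally show ?thesis .
qed


lemma sum_atLeastAtMost_split_at:
  fixes G :: "nat \<Rightarrow> 'a::comm_monoid_add"
  shows "(\<Sum>j=0..a+b. G j) = (\<Sum>l=1..a. G (a - l)) + G a + (\<Sum>l=1..b. G (a + l))"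
proof (induction b)
  case 0
  have "(\<Sum>j=0..<a. G j) = (\<Sum>l=Suc 0..a. G (a - l))"
    by (subst sum.atLeastLessThan_rev_at_least_Suc_atMost) simp
  then show ?case by (simp add: atLeastLessThanSuc_atLeastAtMost[symmetric])
next
  case (Suc b)
  then show ?case by (simp add: add.assoc)
qed

lemma sum_windows_Suc:
  fixes T :: "nat \<Rightarrow> nat \<Rightarrow> 'a::ab_group_add"
  assumes "0 \<notin> L"
  shows "(\<Sum>l\<in>L. \<Sum>k\<in>{Suc n - l..<Suc n}. T l k)
       = (\<Sum>l\<in>L. \<Sum>k\<in>{n - l..<n}. T l k) + (\<Sum>l\<in>L. T l n)
         - (\<Sum>l\<in>L. if l \<le> n then T l (n - l) else 0)"
proof -
  have window: "(\<Sum>k\<in>{Suc n - l..<Suc n}. T l k)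
      = (\<Sum>k\<in>{n - l..<n}. T l k) + T l n - (if l \<le> n then T l (n - l) else 0)"
    if "l \<in> L" for l
  proof (cases "l \<le> n")
    case True
    then have "Suc n - l = Suc (n - l)" by simp
    moreover have "(\<Sum>k\<in>{n - l..<Suc n}. T l k) = T l (n - l) + (\<Sum>k\<in>{Suc (n - l)..<Suc n}. T l k)"
      by (rule sum.atLeast_Suc_lessThan) simp
    moreover have "(\<Sum>k\<in>{n - l..<Suc n}. T l k) = (\<Sum>k\<in>{n - l..<n}. T l k) + T l n"
      by (rule sum.atLeastLessThan_Suc) simp
    ultimately show ?thesis using True by (simp add: algebra_simps)
  next
    case False
    with assms that have "Suc n - l = 0" "n - l = 0" by (auto simp: not_le)
    then show ?thesis using False by simp
  qed
  show ?thesis by (subst sum.cong[OF refl window]) (simp_all add: sum.distrib sum_subtractf)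
qed

lemma banded_recurrence_split_left:
  fixes P :: "nat \<Rightarrow> 'a::real_algebra_1"
  assumes "X * P n = (\<Sum>j=0..a+b. if j \<le> n + a then of_real (u j n) * P (n + a - j) else 0)"
  shows "X * P n = (\<Sum>l=1..a. of_real (u (a - l) n) * P (n + l)) + of_real (u a n) * P n
                 + (\<Sum>l=1..b. if l \<le> n then of_real (u (a + l) n) * P (n - l) else 0)"
  unfolding assms sum_atLeastAtMost_split_at
  by (intro arg_cong2[where f="(+)"] sum.cong) (auto simp: add.commute)

lemma banded_recurrence_split_right:
  fixes Q :: "nat \<Rightarrow> 'a::real_algebra_1"
  assumes rec: "Z * Q n = (\<Sum>j=0..a+b. if j \<le> n + b then of_real (v j n) * Q (n + b - j) else 0)"
    and dual: "\<And>k j. j \<le> a + b \<Longrightarrow> j \<le> k + a \<Longrightarrow> u j k = v (a + b - j) (k + a - j)"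
  shows "Z * Q n = (\<Sum>l=1..b. of_real (u (a + l) (n + l)) * Q (n + l)) + of_real (u a n) * Q n
                 + (\<Sum>l=1..a. if l \<le> n then of_real (u (a - l) (n - l)) * Q (n - l) else 0)"
proof -
  have "Z * Q n = (\<Sum>j=0..b+a. if j \<le> n + b then of_real (v j n) * Q (n + b - j) else 0)"
    using rec by (simp add: add.commute)
  also have "\<dots> = (\<Sum>l=1..b. of_real (u (a + l) (n + l)) * Q (n + l)) + of_real (u a n) * Q n
                 + (\<Sum>l=1..a. if l \<le> n then of_real (u (a - l) (n - l)) * Q (n - l) else 0)"
    unfolding sum_atLeastAtMost_split_at
  proof (intro arg_cong2[where f="(+)"] sum.cong refl)
    fix l
    assume "l \<in> {1..b}"
    then show "(if b - l \<le> n + b then of_real (v (b - l) n) * Q (n + b - (b - l)) else 0)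
             = of_real (u (a + l) (n + l)) * Q (n + l)"
      using dual[of "a + l" "n + l"] by auto
  next
    show "(if b \<le> n + b then of_real (v b n) * Q (n + b - b) else 0) = of_real (u a n) * Q n"
      using dual[of a n] by simp
  next
    fix l
    assume "l \<in> {1..a}"
    then show "(if b + l \<le> n + b then of_real (v (b + l) n) * Q (n + b - (b + l)) else 0)
             = (if l \<le> n then of_real (u (a - l) (n - l)) * Q (n - l) else 0)"
      using dual[of "a - l" "n - l"] by (auto simp: algebra_simps)
  qed
  finally show ?thesis .
qed

theorem christoffel_darboux_banded:
  fixes P Q :: "nat \<Rightarrow> 'a::{comm_ring_1, real_algebra_1}"
  assumes rec_left: "\<And>k. X * P k = (\<Sum>j=0..a+b. if j \<le> k + a then of_real (u j k) * P (k + a - j) else 0)"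
    and rec_right: "\<And>k. Z * Q k = (\<Sum>j=0..a+b. if j \<le> k + b then of_real (v j k) * Q (k + b - j) else 0)"
    and dual: "\<And>k j. j \<le> a + b \<Longrightarrow> j \<le> k + a \<Longrightarrow> u j k = v (a + b - j) (k + a - j)"
  shows "(X - Z) * (\<Sum>k<n. P k * Q k) =
     (\<Sum>l=1..a. \<Sum>k\<in>{n - l..<n}. of_real (u (a - l) k) * P (k + l) * Q k)
   - (\<Sum>l=1..b. \<Sum>k\<in>{n - l..<n}. of_real (u (a + l) (k + l)) * P k * Q (k + l))"
proof (induction n)
  case 0
  then show ?case by simp
next
  case (Suc n)
  define TA where "TA l k = of_real (u (a - l) k) * P (k + l) * Q k" for l k
  define TB where "TB l k = of_real (u (a + l) (k + l)) * P k * Q (k + l)" for l k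
  have windows: "(\<Sum>l=1..c. \<Sum>k\<in>{Suc n - l..<Suc n}. T l k)
       = (\<Sum>l=1..c. \<Sum>k\<in>{n - l..<n}. T l k) + (\<Sum>l=1..c. T l n)
         - (\<Sum>l=1..c. if l \<le> n then T l (n - l) else 0)" for c and T :: "nat \<Rightarrow> nat \<Rightarrow> 'a"
    by (rule sum_windows_Suc) simp
  have split_left: "X * P n = (\<Sum>l=1..a. of_real (u (a - l) n) * P (n + l)) + of_real (u a n) * P n
                 + (\<Sum>l=1..b. if l \<le> n then of_real (u (a + l) n) * P (n - l) else 0)"
    using rec_left by (rule banded_recurrence_split_left)
  have split_right: "Z * Q n = (\<Sum>l=1..b. of_real (u (a + l) (n + l)) * Q (n + l)) + of_real (u a n) * Q n
                 + (\<Sum>l=1..a. if l \<le> n then of_real (u (a - l) (n - l)) * Q (n - l) else 0)"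
    using rec_right dual by (rule banded_recurrence_split_right)
  have "(X - Z) * (\<Sum>k<Suc n. P k * Q k)
      = (X - Z) * (\<Sum>k<n. P k * Q k) + (X * P n) * Q n - P n * (Z * Q n)"
    by (simp add: algebra_simps)
  also have "\<dots> = (\<Sum>l=1..a. \<Sum>k\<in>{Suc n - l..<Suc n}. TA l k)
                - (\<Sum>l=1..b. \<Sum>k\<in>{Suc n - l..<Suc n}. TB l k)"
    unfolding Suc.IH windows split_left split_right
    by (simp add: TA_def TB_def algebra_simps sum_distrib_left sum_distrib_right if_distrib
             cong: if_cong)
  finally show ?case unfolding TA_def TB_def .
qed

locale biorthogonal_system = bimoment_weight +
  fixes p q :: "nat \<Rightarrow> real poly" and a b :: nat
  assumes degree_p: "\<And>j. degree (p j) = j" and degree_q: "\<And>j. degree (q j) = j"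
    and biorthogonal: "\<And>j k. pairing (p j) (q k) = (if j = k then 1 else 0)"
    and exponent_ratio: "\<theta> * real b = real a"
begin

lemma p_nonzero: "p j \<noteq> 0"
  using biorthogonal[of j j] by (auto simp: pairing_def)

lemma q_nonzero: "q k \<noteq> 0"
  using biorthogonal[of k k] by (auto simp: pairing_def)

lemma expansion_p:
  assumes "degree f \<le> N"
  shows "f = (\<Sum>m\<le>N. smult (pairing f (q m)) (p m))"
proof -
  obtain c where c: "f = (\<Sum>m\<le>N. smult (c m) (p m))"
    using graded_basis_expansion[OF degree_p p_nonzero assms] by blast
  have "pairing f (q m) = c m" if "m \<le> N" for m
    using that by (simp add: c pairing_sum_left pairing_smult_left biorthogonal if_distrib cong: if_cong)
  then show ?thesis by (subst (1) c) (auto intro!: sum.cong)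
qed

lemma expansion_q:
  assumes "degree g \<le> N"
  shows "g = (\<Sum>m\<le>N. smult (pairing (p m) g) (q m))"
proof -
  obtain c where c: "g = (\<Sum>m\<le>N. smult (c m) (q m))"
    using graded_basis_expansion[OF degree_q q_nonzero assms] by blast
  have "pairing (p m) g = c m" if "m \<le> N" for m
    using that by (simp add: c pairing_sum_right pairing_smult_right biorthogonal if_distrib cong: if_cong)
  then show ?thesis by (subst (1) c) (auto intro!: sum.cong)
qed

text \<open>Moving \<open>x\<^sup>a\<close> across the pairing turns it into \<open>y\<^sup>b\<close> with \<open>y = x\<^sup>\<theta>\<close>; this is what
  bounds the recurrences from below.\<close>

lemma pairing_monom_p_eq_0:
  assumes "m + b < k"
  shows "pairing (monom 1 a * p k) (q m) = 0"
proof -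
  have "pairing (monom 1 a * p k) (q m) = pairing (p k) (monom 1 b * q m)"
    by (rule pairing_monom_shift[OF exponent_ratio])
  also have "monom 1 b * q m = (\<Sum>i\<le>b + m. smult (pairing (p i) (monom 1 b * q m)) (q i))"
    using degree_monom_one_mult[of b "q m"] degree_q[of m] by (intro expansion_q) simp
  finally show ?thesis using assms by (simp add: pairing_sum_right pairing_smult_right biorthogonal)
qed

lemma pairing_p_monom_eq_0:
  assumes "m + a < k"
  shows "pairing (p m) (monom 1 b * q k) = 0"
proof -
  have "pairing (p m) (monom 1 b * q k) = pairing (monom 1 a * p m) (q k)"
    by (rule pairing_monom_shift[OF exponent_ratio, symmetric])
  also have "monom 1 a * p m = (\<Sum>i\<le>a + m. smult (pairing (monom 1 a * p m) (q i)) (p i))"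
    using degree_monom_one_mult[of a "p m"] degree_p[of m] by (intro expansion_p) simp
  finally show ?thesis using assms by (simp add: pairing_sum_left pairing_smult_left biorthogonal)
qed

definition u :: "nat \<Rightarrow> nat \<Rightarrow> real" where
  "u j k = pairing (monom 1 a * p k) (q (k + a - j))"

definition v :: "nat \<Rightarrow> nat \<Rightarrow> real" where
  "v j k = pairing (p (k + b - j)) (monom 1 b * q k)"

lemma recurrence_p:
  "monom 1 a * p k = (\<Sum>j=0..a+b. if j \<le> k + a then smult (u j k) (p (k + a - j)) else 0)"
proof -
  have "monom 1 a * p k = (\<Sum>m\<le>k + a. smult (pairing (monom 1 a * p k) (q m)) (p m))"
    using degree_monom_one_mult[of a "p k"] degree_p[of k] by (intro expansion_p) simp
  also have "\<dots> = (\<Sum>j=0..a+b. if j \<le> k + a then smult (u j k) (p (k + a - j)) else 0)"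
    unfolding u_def by (rule sum_atMost_reverse_band) (simp add: pairing_monom_p_eq_0)
  finally show ?thesis .
qed

lemma recurrence_q:
  "monom 1 b * q k = (\<Sum>j=0..a+b. if j \<le> k + b then smult (v j k) (q (k + b - j)) else 0)"
proof -
  have "monom 1 b * q k = (\<Sum>m\<le>k + b. smult (pairing (p m) (monom 1 b * q k)) (q m))"
    using degree_monom_one_mult[of b "q k"] degree_q[of k] by (intro expansion_q) simp
  also have "\<dots> = (\<Sum>j=0..b+a. if j \<le> k + b then smult (v j k) (q (k + b - j)) else 0)"
    unfolding v_def by (rule sum_atMost_reverse_band) (simp add: pairing_p_monom_eq_0)
  finally show ?thesis by (simp add: add.commute)
qed

lemma u_eq_v:
  assumes "j \<le> a + b" and "j \<le> k + a"
  shows "u j k = v (a + b - j) (k + a - j)"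
proof -
  have "k + a - j + b - (a + b - j) = k" using assms by simp
  then show ?thesis unfolding u_def v_def using pairing_monom_shift[OF exponent_ratio] by simp
qed

theorem christoffel_darboux:
  fixes x :: complex and y :: real
  assumes "x ^ a \<noteq> of_real y ^ b"
  shows "(\<Sum>k<n. cpoly (p k) x * of_real (poly (q k) y))
    = 1 / (x ^ a - of_real y ^ b) *
      ((\<Sum>l=1..a. \<Sum>k\<in>{n - l..<n}. of_real (u (a - l) k) * cpoly (p (k + l)) x * of_real (poly (q k) y))
     - (\<Sum>l=1..b. \<Sum>k\<in>{n - l..<n}. of_real (u (a + l) (k + l)) * cpoly (p k) x * of_real (poly (q (k + l)) y)))"
proof -
  have "(x ^ a - of_real y ^ b) * (\<Sum>k<n. cpoly (p k) x * cpoly (q k) (of_real y))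
    = (\<Sum>l=1..a. \<Sum>k\<in>{n - l..<n}. of_real (u (a - l) k) * cpoly (p (k + l)) x * cpoly (q k) (of_real y))
    - (\<Sum>l=1..b. \<Sum>k\<in>{n - l..<n}. of_real (u (a + l) (k + l)) * cpoly (p k) x * cpoly (q (k + l)) (of_real y))"
    using cpoly_recurrence[OF recurrence_p] cpoly_recurrence[OF recurrence_q] u_eq_v
    by (rule christoffel_darboux_banded)
  with assms show ?thesis by (simp add: cpoly_of_real field_simps)
qed

end

theorem theorem1p1:
  fixes a b :: nat and w :: "real \<Rightarrow> real" and p q :: "nat \<Rightarrow> real poly"
  defines "\<theta> \<equiv> real a / real b"
  assumes "0 < b" and "b < a"
    and w_pos: "\<And>x. x > 0 \<Longrightarrow> w x > 0"
    and w_mom: "\<And>k::nat. set_integrable lborel {0<..} (\<lambda>x. x ^ k * w x)"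
    and deg_p: "\<And>j. degree (p j) = j" and deg_q: "\<And>j. degree (q j) = j"
    and lc_eq: "\<And>j. lead_coeff (p j) = lead_coeff (q j)"
    and lc_pos: "\<And>j. lead_coeff (p j) > 0"
    and biorth: "\<And>j k. (LINT x:{0<..}|lborel. poly (p j) x * poly (q k) (x powr \<theta>) * w x)
                      = (if j = k then 1 else 0)"
  shows "\<exists>u v :: nat \<Rightarrow> nat \<Rightarrow> real.
     (\<forall>k. monom 1 a * p k =
            (\<Sum>j=0..a+b. if j \<le> k + a then smult (u j k) (p (k + a - j)) else 0))
   \<and> (\<forall>k. monom 1 b * q k =
            (\<Sum>j=0..a+b. if j \<le> k + b then smult (v j k) (q (k + b - j)) else 0))
   \<and> (\<forall>k j. j \<le> a + b \<and> j \<le> k + a \<longrightarrow> u j k = v (a + b - j) (k + a - j))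
   \<and> (\<forall>n::nat. \<forall>x::complex. \<forall>y::real. n \<ge> 1 \<and> y \<ge> 0 \<and> x ^ a \<noteq> (complex_of_real y) ^ a \<longrightarrow>
        (\<Sum>k<n. cpoly (p k) x * complex_of_real (poly (q k) (y powr \<theta>)))
        = 1 / (x ^ a - (complex_of_real y) ^ a) *
          ((\<Sum>l=1..a. \<Sum>k\<in>{n - l..<n}.
               complex_of_real (u (a - l) k) * cpoly (p (k + l)) x
                 * complex_of_real (poly (q k) (y powr \<theta>)))
         - (\<Sum>l=1..b. \<Sum>k\<in>{n - l..<n}.
               complex_of_real (u (a + l) (k + l)) * cpoly (p k) x
                 * complex_of_real (poly (q (k + l)) (y powr \<theta>)))))"
\<comment> \<open>Nor is \<open>1 \<le> n\<close> needed for the formula.\<close>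
proof -
  interpret bimoment_weight w \<theta>
    using w_pos w_mom by unfold_locales (simp_all add: \<theta>_def)
  have "\<theta> * real b = real a" using \<open>0 < b\<close> by (simp add: \<theta>_def)
  then interpret biorthogonal_system w \<theta> p q a b
    using deg_p deg_q biorth by unfold_locales (simp_all add: pairing_def)
  have power: "of_real (y powr \<theta>) ^ b = (of_real y :: complex) ^ a" if "0 \<le> y" for y
    using powr_power_eq_power[OF that _ exponent_ratio] \<open>b < a\<close>
    by (metis gr_zeroI not_less0 of_real_power)
  show ?thesis
  proof (intro exI conjI allI impI)
    show "monom 1 a * p k = (\<Sum>j=0..a+b. if j \<le> k + a then smult (u j k) (p (k + a - j)) else 0)"
      for k by (rule recurrence_p)
    show "monom 1 b * q k = (\<Sum>j=0..a+b. if j \<le> k + b then smult (v j k) (q (k + b - j)) else 0)"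
      for k by (rule recurrence_q)
    show "u j k = v (a + b - j) (k + a - j)" if "j \<le> a + b \<and> j \<le> k + a" for j k
      using that by (simp add: u_eq_v)
  qed (auto simp: christoffel_darboux power)
qed

end
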